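(* Let $H=\ell^2(\mathbb{N})$ with its standard orthonormal basis, $K(H)$ the compact operators on $H$ represented by infinite matrices, and let $A=(a_{ij})\in\ell^\infty(\mathbb{N}^2)$ be such that $S_A(T)=A\circ T$ is a nonzero $*$-preserving map $S_A\colon K(H)\to K(H)$ (i.e. $S_A(T^* )=S_A(T)^*$). If $S_A$ is multiplicative, then $|a_{ij}|=1$ and $a_{ii}=1$ for all $i,j$.
   Context: $A\circ T$ is the entrywise product of $A$ with the matrix of $T$; $\ell^\infty(\mathbb{N}^2)$ denotes infinite matrices with uniformly bounded entries; multiplicative means $S_A(BC)=S_A(B)S_A(C)$ for all $B,C\in K(H)$. *)

theory Defs
  imports "HOL-Analysis.Analysis"
begin

definition l2 :: "(nat \<Rightarrow> complex) set" where
  "l2 = {x. summable (\<lambda>n. (cmod (x n))^2)}"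

definition l2norm :: "(nat \<Rightarrow> complex) \<Rightarrow> real" where
  "l2norm x = sqrt (\<Sum>n. (cmod (x n))^2)"

text \<open>Operators are represented by infinite matrices M i j = <M e_j, e_i>.\<close>

definition mat_apply :: "(nat \<Rightarrow> nat \<Rightarrow> complex) \<Rightarrow> (nat \<Rightarrow> complex) \<Rightarrow> (nat \<Rightarrow> complex)" where
  "mat_apply M x = (\<lambda>i. \<Sum>j. M i j * x j)"

definition bounded_matrix :: "(nat \<Rightarrow> nat \<Rightarrow> complex) \<Rightarrow> bool" where
  "bounded_matrix M \<longleftrightarrow>
     (\<forall>x\<in>l2. \<forall>i. summable (\<lambda>j. M i j * x j)) \<and>
     (\<exists>C. \<forall>x\<in>l2. mat_apply M x \<in> l2 \<and> l2norm (mat_apply M x) \<le> C * l2norm x)"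

text \<open>M is the matrix of a compact operator: bounded, and the image of the closed unit ball
  is relatively compact, i.e. (H being complete) totally bounded.\<close>
definition compact_matrix :: "(nat \<Rightarrow> nat \<Rightarrow> complex) \<Rightarrow> bool" where
  "compact_matrix M \<longleftrightarrow> bounded_matrix M \<and>
     (\<forall>e>0. \<exists>F. finite F \<and> F \<subseteq> l2 \<and>
        (\<forall>x\<in>l2. l2norm x \<le> 1 \<longrightarrow> (\<exists>y\<in>F. l2norm (\<lambda>i. mat_apply M x i - y i) \<le> e)))"

definition schur :: "(nat \<Rightarrow> nat \<Rightarrow> complex) \<Rightarrow> (nat \<Rightarrow> nat \<Rightarrow> complex) \<Rightarrow> (nat \<Rightarrow> nat \<Rightarrow> complex)" where
  "schur A T = (\<lambda>i j. A i j * T i j)"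

definition adj :: "(nat \<Rightarrow> nat \<Rightarrow> complex) \<Rightarrow> (nat \<Rightarrow> nat \<Rightarrow> complex)" where
  "adj T = (\<lambda>i j. cnj (T j i))"

definition mat_mult :: "(nat \<Rightarrow> nat \<Rightarrow> complex) \<Rightarrow> (nat \<Rightarrow> nat \<Rightarrow> complex) \<Rightarrow> (nat \<Rightarrow> nat \<Rightarrow> complex)" where
  "mat_mult B C = (\<lambda>i j. \<Sum>k. B i k * C k j)"

definition linf_entries :: "(nat \<Rightarrow> nat \<Rightarrow> complex) \<Rightarrow> bool" where
  "linf_entries A \<longleftrightarrow> (\<exists>C. \<forall>i j. cmod (A i j) \<le> C)"

end

theory Submission
  imports Defs
begin

text \<open>Test the map on the matrix units \<open>E\<^sub>i\<^sub>j\<close>: since \<open>A \<circ> E\<^sub>i\<^sub>j = a\<^sub>i\<^sub>j E\<^sub>i\<^sub>j\<close> and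
  \<open>E\<^sub>i\<^sub>j E\<^sub>j\<^sub>k = E\<^sub>i\<^sub>k\<close>, \<open>E\<^sub>i\<^sub>j\<^sup>* = E\<^sub>j\<^sub>i\<close>, multiplicativity and \<open>*\<close>-preservation give
  \<open>a\<^sub>i\<^sub>k = a\<^sub>i\<^sub>j a\<^sub>j\<^sub>k\<close> and \<open>a\<^sub>j\<^sub>i = conj a\<^sub>i\<^sub>j\<close>. Hence \<open>a\<^sub>i\<^sub>i = |a\<^sub>i\<^sub>j|\<^sup>2\<close> for all \<open>j\<close>, so the diagonal
  is constant and equal to \<open>|a\<^sub>i\<^sub>j|\<^sup>2\<close> for every \<open>i, j\<close>; it is nonzero because \<open>A \<noteq> 0\<close>, and
  \<open>a\<^sub>i\<^sub>i = a\<^sub>i\<^sub>i\<^sup>2\<close> forces it to be \<open>1\<close>.\<close>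

lemma suminf_single: "(\<Sum>r. if r = i then c else 0) = (c::'a::real_normed_vector)"
proof -
  have "(\<lambda>r. if r = i then c else 0) sums c"
    using sums_single[of i "\<lambda>_. c"] by simp
  then show ?thesis by (rule sums_unique[symmetric])
qed

lemma hermitian_cocycle_unimodular:
  fixes A :: "'a \<Rightarrow> 'a \<Rightarrow> complex"
  assumes cocycle: "\<And>i j k. A i k = A i j * A j k"
    and hermitian: "\<And>i j. A j i = cnj (A i j)"
    and nonzero: "A \<noteq> (\<lambda>i j. 0)"
  shows "cmod (A i j) = 1" and "A i i = 1"
proof -
  have diag_eq_norm_sq: "A i i = of_real ((cmod (A i j))\<^sup>2)" for i j
  proof -
    have "A i i = A i j * A j i" by (rule cocycle)
    also have "\<dots> = A i j * cnj (A i j)" using hermitian[of i j] by simp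
    finally show ?thesis by (simp only: complex_norm_square)
  qed
  have diag_const: "A j j = A i i" for i j
    using diag_eq_norm_sq[of i j] diag_eq_norm_sq[of j i] hermitian[of i j] by simp
  have diag_nonzero: "A i i \<noteq> 0" for i
  proof
    assume "A i i = 0"
    then have "A a b = 0" for a b
      using diag_eq_norm_sq[of a b] diag_const[of i a] by simp
    with nonzero show False by blast
  qed
  have diag_one: "A i i = 1" for i
    using cocycle[of i i i] diag_nonzero[of i] by (metis mult_cancel_left mult.right_neutral)
  then show "A i i = 1" .
  have "(cmod (A i j))\<^sup>2 = 1"
    using diag_eq_norm_sq[of i j] diag_one[of i] by (metis of_real_eq_1_iff)
  then show "cmod (A i j) = 1"
    using norm_ge_zero[of "A i j"] by (auto simp: power2_eq_1_iff)
qed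

definition unit_vec :: "nat \<Rightarrow> complex \<Rightarrow> nat \<Rightarrow> complex" where
  "unit_vec i c = (\<lambda>a. if a = i then c else 0)"

definition matrix_unit :: "nat \<Rightarrow> nat \<Rightarrow> nat \<Rightarrow> nat \<Rightarrow> complex" where
  "matrix_unit i j = (\<lambda>a b. if a = i \<and> b = j then 1 else 0)"

lemma unit_vec_norm_sq: "(\<lambda>n. (cmod (unit_vec i c n))\<^sup>2) = (\<lambda>n. if n = i then (cmod c)\<^sup>2 else 0)"
  by (auto simp: unit_vec_def)

lemma unit_vec_in_l2: "unit_vec i c \<in> l2"
  by (simp add: l2_def unit_vec_norm_sq)

lemma l2norm_unit_vec: "l2norm (unit_vec i c) = cmod c"
  by (simp add: l2norm_def unit_vec_norm_sq suminf_single)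

lemma norm_le_l2norm:
  assumes "x \<in> l2"
  shows "cmod (x j) \<le> l2norm x"
proof -
  have "summable (\<lambda>n. (cmod (x n))\<^sup>2)" using assms by (simp add: l2_def)
  then have "(\<Sum>n\<in>{j}. (cmod (x n))\<^sup>2) \<le> (\<Sum>n. (cmod (x n))\<^sup>2)"
    by (rule sum_le_suminf) auto
  then show ?thesis unfolding l2norm_def by (simp add: real_le_rsqrt)
qed

lemma matrix_unit_row: "(\<lambda>b. matrix_unit i j a b * x b) = (\<lambda>b. if b = j then (if a = i then x j else 0) else 0)"
  by (auto simp: matrix_unit_def)

lemma mat_apply_matrix_unit: "mat_apply (matrix_unit i j) x = unit_vec i (x j)"
  by (auto simp: mat_apply_def matrix_unit_row suminf_single unit_vec_def)

lemma bounded_matrix_unit: "bounded_matrix (matrix_unit i j)"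
  unfolding bounded_matrix_def
proof (intro conjI)
  show "\<forall>x\<in>l2. \<forall>a. summable (\<lambda>b. matrix_unit i j a b * x b)"
    by (simp add: matrix_unit_row)
  show "\<exists>C. \<forall>x\<in>l2. mat_apply (matrix_unit i j) x \<in> l2 \<and>
              l2norm (mat_apply (matrix_unit i j) x) \<le> C * l2norm x"
    by (rule exI[of _ 1])
      (simp add: mat_apply_matrix_unit unit_vec_in_l2 l2norm_unit_vec norm_le_l2norm)
qed

text \<open>The range of \<open>E\<^sub>i\<^sub>j\<close> on the unit ball is \<open>{c e\<^sub>i | |c| \<le> 1}\<close>, so a finite \<open>\<epsilon>\<close>-net of the
  closed unit disc yields one for it.\<close>

lemma compact_matrix_unit: "compact_matrix (matrix_unit i j)"
  unfolding compact_matrix_def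
proof (intro conjI allI impI bounded_matrix_unit)
  fix e :: real
  assume "e > 0"
  then have "cball (0::complex) 1 \<subseteq> (\<Union>c\<in>cball 0 1. ball c e)" by auto
  then obtain K where K: "K \<subseteq> cball 0 1" "finite K" "cball (0::complex) 1 \<subseteq> (\<Union>c\<in>K. ball c e)"
    using compactE_image[OF compact_cball, of "cball (0::complex) 1" "\<lambda>c. ball c e"] by blast
  show "\<exists>F. finite F \<and> F \<subseteq> l2 \<and> (\<forall>x\<in>l2. l2norm x \<le> 1 \<longrightarrow>
          (\<exists>y\<in>F. l2norm (\<lambda>a. mat_apply (matrix_unit i j) x a - y a) \<le> e))"
  proof (intro exI[of _ "unit_vec i ` K"] conjI ballI impI)
    show "finite (unit_vec i ` K)" using K(2) by simp
    show "unit_vec i ` K \<subseteq> l2" using unit_vec_in_l2 by auto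
  next
    fix x assume x: "x \<in> l2" "l2norm x \<le> 1"
    then have "x j \<in> cball 0 1" using norm_le_l2norm[OF x(1), of j] by simp
    then obtain c where c: "c \<in> K" "dist c (x j) < e" using K(3) by auto
    have "(\<lambda>a. mat_apply (matrix_unit i j) x a - unit_vec i c a) = unit_vec i (x j - c)"
      by (auto simp: mat_apply_matrix_unit unit_vec_def)
    moreover have "l2norm (unit_vec i (x j - c)) \<le> e"
      using c(2) by (simp add: l2norm_unit_vec dist_norm norm_minus_commute)
    ultimately show "\<exists>y\<in>unit_vec i ` K. l2norm (\<lambda>a. mat_apply (matrix_unit i j) x a - y a) \<le> e"
      using c(1) by (metis image_eqI)
  qed
qed

lemma schur_matrix_unit: "schur A (matrix_unit i j) = (\<lambda>a b. A i j * matrix_unit i j a b)"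
  by (intro ext) (simp add: schur_def matrix_unit_def)

lemma adj_matrix_unit: "adj (matrix_unit i j) = matrix_unit j i"
  by (intro ext) (auto simp: adj_def matrix_unit_def)

lemma mat_mult_scaled_matrix_units:
  "mat_mult (\<lambda>a b. c * matrix_unit i j a b) (\<lambda>a b. d * matrix_unit j k a b)
     = (\<lambda>a b. c * d * matrix_unit i k a b)"
proof (intro ext)
  fix a b
  have "(\<lambda>m. c * matrix_unit i j a m * (d * matrix_unit j k m b))
          = (\<lambda>m. if m = j then c * d * matrix_unit i k a b else 0)"
    by (auto simp: matrix_unit_def)
  then show "mat_mult (\<lambda>a b. c * matrix_unit i j a b) (\<lambda>a b. d * matrix_unit j k a b) a b
               = c * d * matrix_unit i k a b"
    by (simp add: mat_mult_def suminf_single)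
qed

lemma mat_mult_matrix_units: "mat_mult (matrix_unit i j) (matrix_unit j k) = matrix_unit i k"
  using mat_mult_scaled_matrix_units[of 1 i j 1 k] by simp

lemma schur_mult_cocycle:
  assumes "schur A (mat_mult (matrix_unit i j) (matrix_unit j k))
             = mat_mult (schur A (matrix_unit i j)) (schur A (matrix_unit j k))"
  shows "A i k = A i j * A j k"
proof -
  from assms have "(\<lambda>a b. A i k * matrix_unit i k a b) = (\<lambda>a b. A i j * A j k * matrix_unit i k a b)"
    by (simp only: mat_mult_matrix_units schur_matrix_unit mat_mult_scaled_matrix_units)
  from fun_cong[OF fun_cong[OF this, of i], of k] show ?thesis
    by (simp add: matrix_unit_def)
qed

lemma schur_adj_hermitian:
  assumes "schur A (adj (matrix_unit i j)) = adj (schur A (matrix_unit i j))"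
  shows "A j i = cnj (A i j)"
proof -
  from assms have "schur A (matrix_unit j i) j i = cnj (schur A (matrix_unit i j) i j)"
    unfolding adj_matrix_unit by (simp add: adj_def)
  then show ?thesis unfolding schur_matrix_unit by (simp add: matrix_unit_def)
qed

theorem corollary4p4:
  fixes A :: "nat \<Rightarrow> nat \<Rightarrow> complex"
  assumes bdd: "linf_entries A"
    and maps: "\<forall>T. compact_matrix T \<longrightarrow> compact_matrix (schur A T)"
    and nonzero: "\<exists>T. compact_matrix T \<and> schur A T \<noteq> (\<lambda>i j. 0)"
    and star: "\<forall>T. compact_matrix T \<longrightarrow> schur A (adj T) = adj (schur A T)"
    and mult: "\<forall>B C. compact_matrix B \<longrightarrow> compact_matrix C \<longrightarrow>
                 schur A (mat_mult B C) = mat_mult (schur A B) (schur A C)"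
  shows "\<forall>i j. cmod (A i j) = 1 \<and> A i i = 1"
proof -
  have cocycle: "A i k = A i j * A j k" for i j k
    by (rule schur_mult_cocycle) (simp add: mult compact_matrix_unit)
  have hermitian: "A j i = cnj (A i j)" for i j
    by (rule schur_adj_hermitian) (simp add: star compact_matrix_unit)
  have nonzero_A: "A \<noteq> (\<lambda>i j. 0)"
  proof
    assume "A = (\<lambda>i j. 0)"
    then show False using nonzero by (simp add: schur_def)
  qed
  show ?thesis
    using hermitian_cocycle_unimodular[OF cocycle hermitian nonzero_A] by blast
qed

end
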